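(* Let $E$ be a finite-dimensional real vector space with basis $(e_i)_{1\le i\le d}$, let $(x_n)_{n\in\mathbb{N}}$ be an $E$-valued sequence and $(T_k)_{k\in\mathbb{N}}$ a strictly increasing sequence in $\mathbb{N}$ with $T_0=0$, $L_k=T_{k+1}-T_k>0$. Let $\tilde\lambda_p(x)=x_{T_p}$ and let $\tilde{\mathcal{E}}^{(p)}(x)$ be the pseudo-excursions defined by $\tilde{\mathcal{E}}^{(p)}(x)_n=x_{T_p+n}-\tilde\lambda_p(x)$ for $0\le n\le L_p$ (and $=o$, a cemetery point, for $n>L_p$). Then for all $n\ge 1$ and $1\le i,j\le d$, $$A^{ij}_{T_n}(x)=\sum_{p=0}^{n-1}A^{ij}_{L_p}\big(\tilde{\mathcal{E}}^{(p)}(x)\big)+A^{ij}_n\big(\tilde\lambda(x)\big).$$ In particular, if $G\subset E$ is a $\Lambda$-periodic subgraph, $(x_n)$ is $G$-valued with $(\pi_0(x_n))_n$ visiting every point of $G_0$ infinitely often, $T_{k+1}=\inf\{n>T_k:\pi_0(x_n)=\pi_0(x_0)\}$, $\lambda_k(x)=\pi_\Lambda(x_{T_k})$ and $\mathcal{E}^{(p)}(x)_n=x_{T_p+n}-\lambda_p(x)$ for $0\le n\le L_p$, then $$A^{ij}_{T_n}(x)=\sum_{p=0}^{n-1}A^{ij}_{L_p}\big(\mathcal{E}^{(p)}(x)\big)+A^{ij}_n\big(\lambda(x)\big).$$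
   Context: For an $E$-valued sequence $(y_n)_n$ (coordinates $y^{(i)}$ in the basis $(e_i)$), its area sequence is the antisymmetric matrix sequence $A_0(y)=A_1(y)=0$ and $A^{ij}_n(y)=\sum_{1\le k<l\le n}\big((\Delta y^{(i)})_k(\Delta y^{(j)})_l-(\Delta y^{(j)})_k(\Delta y^{(i)})_l\big)$ with $(\Delta u)_k=u_k-u_{k-1}$; for a pseudo-excursion, $A_{L_p}$ uses only its first $L_p+1$ values. A $\Lambda$-periodic subgraph: an infinite subset $G\subset E$ of separated points invariant under translation by a lattice $\Lambda$, with $G=\bigsqcup_{\lambda\in\Lambda}(\lambda+G_0)$, $G_0$ finite, and each $y\in G$ uniquely $y=\pi_\Lambda(y)+\pi_0(y)$, $\pi_\Lambda(y)\in\Lambda$, $\pi_0(y)\in G_0$. *)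

theory Defs
  imports "HOL-Analysis.Analysis"
begin

text \<open>E is modelled as real^'d; the basis (e_i) is the standard basis, coordinates y $ i.\<close>

definition incr :: "(nat \<Rightarrow> real^'d) \<Rightarrow> 'd \<Rightarrow> nat \<Rightarrow> real" where
  "incr y i k = y k $ i - y (k - 1) $ i"

definition area :: "(nat \<Rightarrow> real^'d) \<Rightarrow> nat \<Rightarrow> 'd \<Rightarrow> 'd \<Rightarrow> real" where
  "area y n i j = (if n \<le> 1 then 0 else
     (\<Sum>l\<in>{1..n}. \<Sum>k\<in>{1..<l}. incr y i k * incr y j l - incr y j k * incr y i l))"

text \<open>Excursion of length L p = T (p+1) - T p, shifted by c p; None is the cemetery point.\<close>
definition excursion :: "(nat \<Rightarrow> real^'d) \<Rightarrow> (nat \<Rightarrow> nat) \<Rightarrow> (nat \<Rightarrow> real^'d) \<Rightarrow> nat \<Rightarrow> nat \<Rightarrow> (real^'d) option" where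
  "excursion x T c p n = (if n \<le> T (Suc p) - T p then Some (x (T p + n) - c p) else None)"

text \<open>Area of an excursion up to its length: only the first L+1 values are used.\<close>
definition exc_area :: "(nat \<Rightarrow> (real^'d) option) \<Rightarrow> nat \<Rightarrow> 'd \<Rightarrow> 'd \<Rightarrow> real" where
  "exc_area e L i j = area (\<lambda>n. the (e n)) L i j"

definition is_lattice :: "(real^'d) set \<Rightarrow> bool" where
  "is_lattice \<Lambda> \<longleftrightarrow> (\<exists>b :: 'd \<Rightarrow> real^'d. inj b \<and> independent (range b) \<and>
      \<Lambda> = range (\<lambda>c :: 'd \<Rightarrow> int. \<Sum>i\<in>UNIV. of_int (c i) *\<^sub>R b i))"

definition periodic_subgraph :: "(real^'d) set \<Rightarrow> (real^'d) set \<Rightarrow> (real^'d) set \<Rightarrow> bool" where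
  "periodic_subgraph G \<Lambda> G0 \<longleftrightarrow>
     infinite G \<and>
     (\<exists>\<delta>>0. \<forall>y\<in>G. \<forall>z\<in>G. y \<noteq> z \<longrightarrow> dist y z \<ge> \<delta>) \<and>
     is_lattice \<Lambda> \<and>
     (\<forall>l\<in>\<Lambda>. (\<lambda>y. l + y) ` G = G) \<and>
     finite G0 \<and>
     G = (\<Union>l\<in>\<Lambda>. (\<lambda>g. l + g) ` G0) \<and>
     (\<forall>y\<in>G. \<exists>!(l, g). l \<in> \<Lambda> \<and> g \<in> G0 \<and> y = l + g)"

definition pi_lat :: "(real^'d) set \<Rightarrow> (real^'d) set \<Rightarrow> real^'d \<Rightarrow> real^'d" where
  "pi_lat \<Lambda> G0 y = fst (THE (l, g). l \<in> \<Lambda> \<and> g \<in> G0 \<and> y = l + g)"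

definition pi_0 :: "(real^'d) set \<Rightarrow> (real^'d) set \<Rightarrow> real^'d \<Rightarrow> real^'d" where
  "pi_0 \<Lambda> G0 y = snd (THE (l, g). l \<in> \<Lambda> \<and> g \<in> G0 \<and> y = l + g)"

end

theory Submission
  imports Defs
begin

text \<open>The area is additive under concatenation up to a cross term: splitting a path at time a,
  the area up to time a + m is the area up to a, plus the area of the shifted tail, plus the
  signed area spanned by the increments x a - x 0 and x (a+m) - x a. Summing along the times
  T p, these cross terms add up to exactly the area of the subsampled path q \<mapsto> x (T q).
  The area only sees increments, so translating a path by a constant changes nothing; in the
  periodic case the lattice part of x (T q) is x (T q) minus the fixed point pi_0 (x 0)
  revisited at every T q, which reduces the second claim to the first.\<close>

lemma area_eq_sum:
  "area y n i j = (\<Sum>l\<in>{1..n}. \<Sum>k\<in>{1..<l}. incr y i k * incr y j l - incr y j k * incr y i l)"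
proof (cases "n \<le> 1")
  case True
  then have "n = 0 \<or> n = 1" by auto
  then show ?thesis unfolding area_def by auto
qed (simp add: area_def)

lemma sum_incr_telescope: "(\<Sum>k\<in>{1..<Suc n}. incr y i k) = y n $ i - y 0 $ i"
  by (induction n) (auto simp: incr_def)

lemma area_Suc:
  "area y (Suc n) i j = area y n i j +
     ((y n - y 0) $ i * incr y j (Suc n) - (y n - y 0) $ j * incr y i (Suc n))"
proof -
  have "area y (Suc n) i j = area y n i j +
      (\<Sum>k\<in>{1..<Suc n}. incr y i k * incr y j (Suc n) - incr y j k * incr y i (Suc n))"
    unfolding area_eq_sum by (simp add: sum.atLeast_Suc_atMost_Suc_shift del: sum.op_ivl_Suc)
  also have "(\<Sum>k\<in>{1..<Suc n}. incr y i k * incr y j (Suc n) - incr y j k * incr y i (Suc n))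
      = (\<Sum>k\<in>{1..<Suc n}. incr y i k) * incr y j (Suc n)
        - (\<Sum>k\<in>{1..<Suc n}. incr y j k) * incr y i (Suc n)"
    by (simp only: sum_subtractf sum_distrib_right)
  finally show ?thesis by (simp only: sum_incr_telescope vector_minus_component)
qed

lemma area_cong: "(\<And>t. t \<le> n \<Longrightarrow> y t = z t) \<Longrightarrow> area y n i j = area z n i j"
  unfolding area_eq_sum incr_def by (intro sum.cong refl) auto

lemma area_translate: "area (\<lambda>t. y t - c) n i j = area y n i j"
  unfolding area_eq_sum incr_def by simp

lemma area_add:
  "area x (a + m) i j = area x a i j + area (\<lambda>t. x (a + t)) m i j +
     ((x a - x 0) $ i * (x (a + m) - x a) $ j - (x a - x 0) $ j * (x (a + m) - x a) $ i)"
proof (induction m)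
  case 0
  then show ?case by (simp add: area_def)
next
  case (Suc m)
  have "area x (Suc (a + m)) i j = area x (a + m) i j +
      ((x (a + m) - x 0) $ i * incr x j (Suc (a + m))
       - (x (a + m) - x 0) $ j * incr x i (Suc (a + m)))"
    by (rule area_Suc)
  moreover have "area (\<lambda>t. x (a + t)) (Suc m) i j = area (\<lambda>t. x (a + t)) m i j +
      ((x (a + m) - x a) $ i * incr x j (Suc (a + m))
       - (x (a + m) - x a) $ j * incr x i (Suc (a + m)))"
    using area_Suc[of "\<lambda>t. x (a + t)" m] by (simp add: incr_def)
  ultimately show ?case using Suc by (simp add: incr_def algebra_simps)
qed

lemma exc_area_excursion:
  "exc_area (excursion x T c p) (T (Suc p) - T p) i j
     = area (\<lambda>t. x (T p + t)) (T (Suc p) - T p) i j"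
proof -
  have "exc_area (excursion x T c p) (T (Suc p) - T p) i j
      = area (\<lambda>t. x (T p + t) - c p) (T (Suc p) - T p) i j"
    unfolding exc_area_def by (rule area_cong) (simp add: excursion_def)
  then show ?thesis by (simp only: area_translate)
qed

lemma area_excursion_decomposition:
  assumes "mono T" "T 0 = 0"
  shows "area x (T n) i j = (\<Sum>p<n. exc_area (excursion x T c p) (T (Suc p) - T p) i j)
           + area (\<lambda>q. x (T q)) n i j"
proof (induction n)
  case 0
  then show ?case using assms(2) by (simp add: area_def)
next
  case (Suc n)
  have le: "T n \<le> T (Suc n)" using assms(1) by (simp add: monoD)
  have "area x (T (Suc n)) i j = area x (T n + (T (Suc n) - T n)) i j" using le by simp
  also have "\<dots> = area x (T n) i j + area (\<lambda>t. x (T n + t)) (T (Suc n) - T n) i j +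
      ((x (T n) - x 0) $ i * (x (T (Suc n)) - x (T n)) $ j
       - (x (T n) - x 0) $ j * (x (T (Suc n)) - x (T n)) $ i)"
    using area_add[of x "T n" "T (Suc n) - T n"] le by simp
  finally show ?case using Suc area_Suc[of "\<lambda>q. x (T q)" n i j] assms(2)
    by (simp add: exc_area_excursion incr_def algebra_simps)
qed

lemma periodic_subgraph_decompose:
  assumes "periodic_subgraph G \<Lambda> G0" "y \<in> G"
  shows "pi_lat \<Lambda> G0 y \<in> \<Lambda>" "pi_0 \<Lambda> G0 y \<in> G0" "y = pi_lat \<Lambda> G0 y + pi_0 \<Lambda> G0 y"
proof -
  have "\<exists>!(l, g). l \<in> \<Lambda> \<and> g \<in> G0 \<and> y = l + g"
    using assms unfolding periodic_subgraph_def by blast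
  then have "(\<lambda>(l, g). l \<in> \<Lambda> \<and> g \<in> G0 \<and> y = l + g) (THE (l, g). l \<in> \<Lambda> \<and> g \<in> G0 \<and> y = l + g)"
    by (rule theI')
  then show "pi_lat \<Lambda> G0 y \<in> \<Lambda>" "pi_0 \<Lambda> G0 y \<in> G0" "y = pi_lat \<Lambda> G0 y + pi_0 \<Lambda> G0 y"
    unfolding pi_lat_def pi_0_def by (simp_all add: case_prod_beta)
qed

lemma successive_hitting_times:
  fixes T :: "nat \<Rightarrow> nat"
  assumes "infinite {m. P m}" and T_Suc: "\<And>k. T (Suc k) = (LEAST m. m > T k \<and> P m)"
  shows "T k < T (Suc k)" "P (T (Suc k))"
proof -
  obtain m where "m > T k" "P m"
    using assms(1) by (metis (mono_tags, lifting) finite_nat_set_iff_bounded_le mem_Collect_eq not_le)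
  then have "(LEAST m. m > T k \<and> P m) > T k \<and> P (LEAST m. m > T k \<and> P m)"
    by (metis (mono_tags, lifting) LeastI)
  then show "T k < T (Suc k)" "P (T (Suc k))" by (simp_all add: T_Suc)
qed

theorem mainTheorem5:
  shows "(\<forall>(x :: nat \<Rightarrow> real^'d) (T :: nat \<Rightarrow> nat).
            strict_mono T \<and> T 0 = 0 \<longrightarrow>
            (\<forall>n\<ge>1. \<forall>i j.
               area x (T n) i j =
                 (\<Sum>p<n. exc_area (excursion x T (\<lambda>q. x (T q)) p) (T (Suc p) - T p) i j)
                 + area (\<lambda>q. x (T q)) n i j))
       \<and>
         (\<forall>(G :: (real^'d) set) \<Lambda> G0 (x :: nat \<Rightarrow> real^'d) (T :: nat \<Rightarrow> nat).
            periodic_subgraph G \<Lambda> G0 \<and>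
            (\<forall>n. x n \<in> G) \<and>
            (\<forall>g\<in>G0. infinite {n. pi_0 \<Lambda> G0 (x n) = g}) \<and>
            T 0 = 0 \<and>
            (\<forall>k. T (Suc k) = (LEAST m. m > T k \<and> pi_0 \<Lambda> G0 (x m) = pi_0 \<Lambda> G0 (x 0))) \<longrightarrow>
            (\<forall>n\<ge>1. \<forall>i j.
               area x (T n) i j =
                 (\<Sum>p<n. exc_area (excursion x T (\<lambda>q. pi_lat \<Lambda> G0 (x (T q))) p) (T (Suc p) - T p) i j)
                 + area (\<lambda>q. pi_lat \<Lambda> G0 (x (T q))) n i j))"
proof (intro conjI allI impI)
  fix x :: "nat \<Rightarrow> real^'d" and T :: "nat \<Rightarrow> nat" and n i j
  assume "strict_mono T \<and> T 0 = 0"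
  then show "area x (T n) i j =
      (\<Sum>p<n. exc_area (excursion x T (\<lambda>q. x (T q)) p) (T (Suc p) - T p) i j)
      + area (\<lambda>q. x (T q)) n i j"
    using area_excursion_decomposition strict_mono_mono by blast
next
  fix G :: "(real^'d) set" and \<Lambda> G0 and x :: "nat \<Rightarrow> real^'d" and T n i j
  assume "periodic_subgraph G \<Lambda> G0 \<and> (\<forall>n. x n \<in> G) \<and>
      (\<forall>g\<in>G0. infinite {n. pi_0 \<Lambda> G0 (x n) = g}) \<and> T 0 = 0 \<and>
      (\<forall>k. T (Suc k) = (LEAST m. m > T k \<and> pi_0 \<Lambda> G0 (x m) = pi_0 \<Lambda> G0 (x 0)))"
  then have G: "periodic_subgraph G \<Lambda> G0" and x: "\<And>n. x n \<in> G"
    and visits: "\<forall>g\<in>G0. infinite {n. pi_0 \<Lambda> G0 (x n) = g}" and T0: "T 0 = 0"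
    and T_Suc: "\<And>k. T (Suc k) = (LEAST m. m > T k \<and> pi_0 \<Lambda> G0 (x m) = pi_0 \<Lambda> G0 (x 0))"
    by auto
  define g0 where "g0 = pi_0 \<Lambda> G0 (x 0)"
  have "infinite {m. pi_0 \<Lambda> G0 (x m) = g0}"
    using visits periodic_subgraph_decompose(2)[OF G x] g0_def by blast
  note hits = successive_hitting_times[where P = "\<lambda>m. pi_0 \<Lambda> G0 (x m) = g0" and T = T, OF this T_Suc[folded g0_def]]
  have "strict_mono T" using hits(1) by (simp add: strict_mono_Suc_iff)
  have "pi_0 \<Lambda> G0 (x (T q)) = g0" for q by (cases q) (simp_all add: T0 g0_def hits(2))
  then have "pi_lat \<Lambda> G0 (x (T q)) = x (T q) - g0" for q
    by (metis periodic_subgraph_decompose(3)[OF G x] add_diff_cancel)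
  then have "area (\<lambda>q. pi_lat \<Lambda> G0 (x (T q))) n i j = area (\<lambda>q. x (T q)) n i j"
    by (simp only: area_translate)
  then show "area x (T n) i j =
      (\<Sum>p<n. exc_area (excursion x T (\<lambda>q. pi_lat \<Lambda> G0 (x (T q))) p) (T (Suc p) - T p) i j)
      + area (\<lambda>q. pi_lat \<Lambda> G0 (x (T q))) n i j"
    using area_excursion_decomposition[OF strict_mono_mono[OF \<open>strict_mono T\<close>] T0] by simp
qed

end
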